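(* Let $T_{\max}$ be a positive integer and suppose the attack period $T_a=[k_s,k_e)$ satisfies $|T_a|=k_e-k_s\le T_{\max}$. For every integer timestep $k\ge T_{\max}$, writing $k'=k-T_{\max}$, the set $$\hat{I}_k=\mathbf{Post}_{u_{c,k'}\dots u_{c,k-1}}\big(\tilde{x}_{k'}\big)\cup\{\tilde{x}_k\}$$ contains the actual state, i.e. $x_k\in\hat{I}_k$.
   Context: There are $n$ vehicles with positions $x_k\in\mathbb{R}^n$ evolving in discrete time by $x_{k+1}=x_k+u_k+\delta_k$. The coordinates are partitioned into controlled and uncontrolled vehicles, and $u_k=(u_{c,k},u_{uc,k})$ with $u_{c,k}\in U_c$ (applied input of the controlled vehicles, known) and $u_{uc,k}\in U_{uc}$ (unknown inputs of uncontrolled vehicles). The disturbance satisfies $\delta_k\in\Delta=[\delta_{\min},\delta_{\max}]^n$. The multi-step post operator is $\mathbf{Post}_{u_{c,1}\dots u_{c,m}}(y)=\big\{y+\sum_{j=1}^m (u_{c,j},u_{uc,j})+\sum_{j=1}^m\delta_j:\ u_{uc,j}\in U_{uc},\ \delta_j\in\Delta\big\}$, where $(u_c,u_{uc})$ denotes the vector in $\mathbb{R}^n$ whose controlled coordinates are $u_c$ and uncontrolled coordinates are $u_{uc}$. Sensor attack: the received measurement is $\tilde{x}_k=x_k+e_k$ for $k\in T_a=[k_s,k_e)$ (a single interval of integer timesteps) with arbitrary error $e_k\in\mathbb{R}^n$, and $\tilde{x}_k=x_k$ for $k\notin T_a$. *)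

theory Defs
  imports "HOL-Analysis.Analysis"
begin

text \<open>Vehicles are indexed by the finite type 'n; C is the set of controlled vehicles.
  (u_c, u_uc) is the vector whose controlled coordinates come from u_c and whose
  uncontrolled coordinates come from u_uc (other coordinates of the arguments are ignored).\<close>
definition combine :: "'n set \<Rightarrow> real^'n \<Rightarrow> real^'n \<Rightarrow> real^'n" where
  "combine C uc uuc = (\<chi> i. if i \<in> C then uc $ i else uuc $ i)"

definition Delta_box :: "real \<Rightarrow> real \<Rightarrow> (real^'n) set" where
  "Delta_box dmin dmax = {d. \<forall>i. dmin \<le> d $ i \<and> d $ i \<le> dmax}"

definition Post :: "'n set \<Rightarrow> (real^'n) set \<Rightarrow> (real^'n) set \<Rightarrow> (real^'n) list \<Rightarrow> real^'n \<Rightarrow> (real^'n) set" where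
  "Post C Uuc Delta ucs y =
     {y + (\<Sum>j<length ucs. combine C (ucs ! j) (w j)) + (\<Sum>j<length ucs. d j) | w d.
        (\<forall>j<length ucs. w j \<in> Uuc) \<and> (\<forall>j<length ucs. d j \<in> Delta)}"

definition measured :: "(nat \<Rightarrow> real^'n) \<Rightarrow> (nat \<Rightarrow> real^'n) \<Rightarrow> nat \<Rightarrow> nat \<Rightarrow> nat \<Rightarrow> real^'n" where
  "measured x e ks ke k = (if ks \<le> k \<and> k < ke then x k + e k else x k)"

end

theory Submission
  imports Defs
begin

text \<open>An attack interval of length at most \<open>T\<close> cannot contain both \<open>k - T\<close> and \<open>k\<close>.
  If \<open>k - T\<close> is unattacked, unrolling the dynamics over the last \<open>T\<close> steps places \<open>x k\<close>
  in the post set of the exact measurement \<open>x (k - T)\<close>; otherwise \<open>k\<close> itself is unattacked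
  and the received measurement at \<open>k\<close> is the true state.\<close>

lemma trajectory_unroll:
  assumes "\<And>j. x (Suc j) = x j + combine C (uc j) (uuc j) + \<delta> j"
  shows "x (a + m) = x a + (\<Sum>j<m. combine C (uc (a + j)) (uuc (a + j))) + (\<Sum>j<m. \<delta> (a + j))"
  by (induction m) (auto simp: assms algebra_simps)

lemma trajectory_in_Post:
  assumes dyn: "\<And>j. x (Suc j) = x j + combine C (uc j) (uuc j) + \<delta> j"
    and "\<And>j. uuc j \<in> Uuc"
    and "\<And>j. \<delta> j \<in> Delta"
  shows "x (a + m) \<in> Post C Uuc Delta (map uc [a..<a + m]) (x a)"
proof -
  have "(\<Sum>j<m. combine C (uc (a + j)) (uuc (a + j)))
      = (\<Sum>j<m. combine C (map uc [a..<a + m] ! j) (uuc (a + j)))"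
    by (rule sum.cong) simp_all
  then have "x (a + m) = x a + (\<Sum>j<length (map uc [a..<a + m]). combine C (map uc [a..<a + m] ! j) (uuc (a + j)))
      + (\<Sum>j<length (map uc [a..<a + m]). \<delta> (a + j))"
    using trajectory_unroll[of x C uc uuc \<delta> a m, OF dyn] by simp
  then show ?thesis
    unfolding Post_def using assms(2,3)
    by (intro CollectI exI[of _ "\<lambda>j. uuc (a + j)"] exI[of _ "\<lambda>j. \<delta> (a + j)"]) simp
qed

lemma measured_unattacked:
  assumes "\<not> (ks \<le> k \<and> k < ke)"
  shows "measured x e ks ke k = x k"
  using assms unfolding measured_def by presburger

lemma short_interval_misses_an_endpoint:
  fixes a T ks ke :: nat
  assumes "0 < T" and "ke - ks \<le> T"
  shows "\<not> (ks \<le> a \<and> a < ke) \<or> \<not> (ks \<le> a + T \<and> a + T < ke)"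
  using assms by linarith

theorem lemma3:
  fixes x uc uuc \<delta> e :: "nat \<Rightarrow> real^'n"
    and C :: "'n set" and Uc Uuc :: "(real^'n) set"
    and dmin dmax :: real and ks ke Tmax k :: nat
  assumes dyn: "\<And>j. x (Suc j) = x j + combine C (uc j) (uuc j) + \<delta> j"
    and uc_in: "\<And>j. uc j \<in> Uc"
    and uuc_in: "\<And>j. uuc j \<in> Uuc"
    and dist_in: "\<And>j. \<delta> j \<in> Delta_box dmin dmax"
    and Tmax_pos: "0 < Tmax"
    and attack_len: "ke - ks \<le> Tmax"
    and k_ge: "Tmax \<le> k"
  shows "x k \<in> Post C Uuc (Delta_box dmin dmax) (map uc [k - Tmax..<k]) (measured x e ks ke (k - Tmax))
                \<union> {measured x e ks ke k}"
proof -
  define a where "a = k - Tmax"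
  have k_eq: "k = a + Tmax" using k_ge by (simp add: a_def)
  from short_interval_misses_an_endpoint[OF Tmax_pos attack_len, of a]
  show ?thesis
  proof
    assume "\<not> (ks \<le> a \<and> a < ke)"
    then have "measured x e ks ke a = x a" by (rule measured_unattacked)
    moreover have "x (a + Tmax) \<in> Post C Uuc (Delta_box dmin dmax) (map uc [a..<a + Tmax]) (x a)"
      using dyn uuc_in dist_in by (rule trajectory_in_Post)
    ultimately show ?thesis by (simp add: k_eq)
  next
    assume "\<not> (ks \<le> a + Tmax \<and> a + Tmax < ke)"
    then show ?thesis by (simp add: k_eq measured_unattacked)
  qed
qed

end
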